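(* Let $1<a_1<a_2$ be coprime integers. The function $r_0:[1,\infty]\to[0,1]$ is strictly decreasing.
   Context: For $t\in[1,\infty)$ and $(u,v)\in\mathbb{R}^2$, $\|(u,v)\|_t=(|u|^t+|v|^t)^{1/t}$, and $\|(u,v)\|_\infty=\max(|u|,|v|)$. For $t\in[1,\infty]$ define $\mu_t(r)=\left\|\left(\frac{1-r}{a_1},\frac{r}{a_2}\right)\right\|_t$ for $r\in[0,1]$, and $r_0(t)=\min\{r\in[0,1]:\mu_t(r)=\frac{1}{a_2}\}$. The domain $[1,\infty]$ is ordered with $\infty$ as its largest element. *)

theory Defs
  imports "HOL-Analysis.Analysis" "HOL-Library.Extended_Real"
begin

text \<open>The t-norm on R^2 for t in [1,\<infinity>], with t encoded as an extended real
  (t = \<infinity> gives the max norm).\<close>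
definition tnorm :: "ereal \<Rightarrow> real \<Rightarrow> real \<Rightarrow> real" where
  "tnorm t u v = (if t = \<infinity> then max \<bar>u\<bar> \<bar>v\<bar>
     else (\<bar>u\<bar> powr real_of_ereal t + \<bar>v\<bar> powr real_of_ereal t) powr (1 / real_of_ereal t))"

definition mu :: "real \<Rightarrow> real \<Rightarrow> ereal \<Rightarrow> real \<Rightarrow> real" where
  "mu a1 a2 t r = tnorm t ((1 - r) / a1) (r / a2)"

definition r0 :: "real \<Rightarrow> real \<Rightarrow> ereal \<Rightarrow> real" where
  "r0 a1 a2 t = (LEAST r. r \<in> {0..1} \<and> mu a1 a2 t r = 1 / a2)"

end

theory Submission
  imports Defs
begin

text \<open>
  The function \<open>mu t\<close> runs continuously from \<open>1/a\<sub>1\<close> at \<open>r = 0\<close> to \<open>1/a\<sub>2\<close> at \<open>r = 1\<close>, so by the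
  intermediate value theorem \<open>r0 t\<close> lies strictly below any \<open>q\<close> with \<open>mu t q < 1/a\<sub>2\<close>.
  Since the \<open>t\<close>-norm of a vector with two nonzero entries is strictly decreasing in \<open>t\<close>,
  \<open>mu t (r0 s) < mu s (r0 s) = 1/a\<sub>2\<close> for \<open>s < t\<close> as soon as \<open>0 < r0 s < 1\<close>. The latter
  holds for \<open>s > 1\<close> because near \<open>r = 1\<close> the first coordinate contributes only to order
  \<open>(1 - r)\<^sup>s\<close>, so \<open>mu s\<close> dips below \<open>1/a\<sub>2\<close>. For \<open>s = 1\<close> the norm is linear in \<open>r\<close>,
  \<open>r0 1 = 1\<close>, and the same dip of \<open>mu t\<close> gives \<open>r0 t < 1\<close>.
\<close>

lemma tnorm_ereal: "tnorm (ereal T) u v = (\<bar>u\<bar> powr T + \<bar>v\<bar> powr T) powr (1 / T)"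
  by (simp add: tnorm_def)

lemma tnorm_PInf: "tnorm \<infinity> u v = max \<bar>u\<bar> \<bar>v\<bar>"
  by (simp add: tnorm_def)

lemma tnorm_one: "tnorm 1 u v = \<bar>u\<bar> + \<bar>v\<bar>"
  by (simp add: tnorm_def one_ereal_def)

lemma tnorm_zero_right:
  assumes "1 \<le> t"
  shows "tnorm t u 0 = \<bar>u\<bar>"
  using assms by (cases t) (auto simp: tnorm_def powr_powr)

lemma tnorm_commute: "tnorm t u v = tnorm t v u"
  by (simp add: tnorm_def add.commute max.commute)

lemma tnorm_zero_left:
  assumes "1 \<le> t"
  shows "tnorm t 0 v = \<bar>v\<bar>"
  using tnorm_zero_right[OF assms] tnorm_commute by metis

lemma continuous_on_tnorm [continuous_intros]:
  assumes "1 \<le> t" "continuous_on S f" "continuous_on S g"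
  shows "continuous_on S (\<lambda>x. tnorm t (f x) (g x))"
proof (cases t)
  case (real T)
  with assms have "T \<ge> 1" by simp
  with assms have "continuous_on S (\<lambda>x. (\<bar>f x\<bar> powr T + \<bar>g x\<bar> powr T) powr (1 / T))"
    by (intro continuous_on_powr' continuous_intros) auto
  with real show ?thesis by (simp add: tnorm_ereal)
next
  case PInf
  with assms show ?thesis by (simp only: tnorm_PInf) (intro continuous_intros)
qed (use assms in auto)

lemma abs_less_tnorm_ereal:
  assumes "u \<noteq> 0" "v \<noteq> 0" "T > 0"
  shows "\<bar>u\<bar> < tnorm (ereal T) u v"
proof -
  have "(\<bar>u\<bar> powr T) powr (1 / T) < (\<bar>u\<bar> powr T + \<bar>v\<bar> powr T) powr (1 / T)"
    using assms by (intro powr_less_mono2) auto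
  with assms show ?thesis by (simp add: tnorm_ereal powr_powr)
qed

lemma tnorm_ereal_strict_antimono:
  assumes "u \<noteq> 0" "v \<noteq> 0" "1 \<le> P" "P < Q"
  shows "tnorm (ereal Q) u v < tnorm (ereal P) u v"
proof -
  define N where "N = tnorm (ereal P) u v"
  have uN: "\<bar>u\<bar> < N" and vN: "\<bar>v\<bar> < N"
    using abs_less_tnorm_ereal[of u v P] abs_less_tnorm_ereal[of v u P] assms
    by (auto simp: N_def tnorm_commute)
  then have N: "N > 0" by simp
  have "(\<bar>u\<bar> / N) powr P + (\<bar>v\<bar> / N) powr P = (\<bar>u\<bar> powr P + \<bar>v\<bar> powr P) / N powr P"
    using N by (simp add: powr_divide add_divide_distrib)
  also have "\<dots> = 1"
    using N assms by (simp add: N_def tnorm_ereal powr_powr)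
  finally have sum_P: "(\<bar>u\<bar> / N) powr P + (\<bar>v\<bar> / N) powr P = 1" .
  \<comment> \<open>both ratios lie in (0,1), so raising them to the larger power Q makes them smaller\<close>
  have "(\<bar>u\<bar> / N) powr Q < (\<bar>u\<bar> / N) powr P" "(\<bar>v\<bar> / N) powr Q < (\<bar>v\<bar> / N) powr P"
    using uN vN N assms by (auto intro!: powr_less_mono')
  with sum_P have sum_Q: "(\<bar>u\<bar> / N) powr Q + (\<bar>v\<bar> / N) powr Q < 1" by simp
  have "\<bar>u\<bar> powr Q + \<bar>v\<bar> powr Q = N powr Q * ((\<bar>u\<bar> / N) powr Q + (\<bar>v\<bar> / N) powr Q)"
    using N by (simp add: powr_divide field_simps)
  also have "\<dots> < N powr Q" using sum_Q N by simp
  finally have "(\<bar>u\<bar> powr Q + \<bar>v\<bar> powr Q) powr (1 / Q) < (N powr Q) powr (1 / Q)"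
    using assms by (intro powr_less_mono2) auto
  with assms N show ?thesis by (simp add: powr_powr N_def tnorm_ereal)
qed

lemma tnorm_strict_antimono:
  assumes "u \<noteq> 0" "v \<noteq> 0" "1 \<le> s" "s < t"
  shows "tnorm t u v < tnorm s u v"
proof -
  obtain S where S: "s = ereal S" "1 \<le> S" using assms by (cases s) auto
  show ?thesis
  proof (cases t)
    case (real T)
    with S assms show ?thesis by (simp add: tnorm_ereal_strict_antimono)
  next
    case PInf
    with S assms show ?thesis
      using abs_less_tnorm_ereal[of u v S] abs_less_tnorm_ereal[of v u S]
      by (auto simp: tnorm_PInf tnorm_commute)
  qed (use assms in auto)
qed

lemma mu_at_0:
  assumes "1 \<le> t" "0 < a"
  shows "mu a b t 0 = 1 / a"
  using assms by (simp add: mu_def tnorm_zero_right)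

lemma mu_at_1:
  assumes "1 \<le> t" "0 < b"
  shows "mu a b t 1 = 1 / b"
  using assms by (simp add: mu_def tnorm_zero_left)

lemma continuous_on_mu:
  assumes "1 \<le> t"
  shows "continuous_on S (mu a b t)"
  unfolding mu_def divide_inverse using assms by (intro continuous_intros)

lemma mu_strict_antimono:
  assumes "1 \<le> s" "s < t" "0 < r" "r < 1" "0 < a" "0 < b"
  shows "mu a b t r < mu a b s r"
  using assms unfolding mu_def by (intro tnorm_strict_antimono) auto

lemma mu_one_eq_inverse_iff:
  assumes "0 < a" "a < b" "r \<in> {0..1}"
  shows "mu a b 1 r = 1 / b \<longleftrightarrow> r = 1"
proof
  assume "mu a b 1 r = 1 / b"
  with assms have "(1 - r) / a + r / b = 1 / b" by (simp add: mu_def tnorm_one)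
  then have "(1 - r) / a = (1 - r) / b" by (simp add: diff_divide_distrib)
  with assms show "r = 1" by (cases "r = 1") auto
qed (use assms in \<open>simp add: mu_at_1\<close>)

lemma ex_mu_ereal_less_inverse:
  assumes "1 < T" "0 < a" "a < b"
  shows "\<exists>p. 0 < p \<and> p < 1 \<and> mu a b (ereal T) p < 1 / b"
proof -
  define e where "e = (a / b) powr (T / (T - 1)) / 2"
  have "(a / b) powr (T / (T - 1)) \<le> 1" using assms by (intro powr_le1) auto
  moreover have "0 < (a / b) powr (T / (T - 1))" using assms by simp
  ultimately have e: "0 < e" "e < 1" "e < (a / b) powr (T / (T - 1))" by (auto simp: e_def)
  \<comment> \<open>e is so small that e^(T-1) < (a/b)^T, which makes (e/a)^T < e/b^T\<close>
  have "e powr (T - 1) < ((a / b) powr (T / (T - 1))) powr (T - 1)"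
    using e assms by (intro powr_less_mono2) auto
  also have "\<dots> = (a / b) powr T" using assms by (simp add: powr_powr)
  finally have "e * e powr (T - 1) < e * (a / b) powr T" using e by simp
  then have "e powr T < e * (a / b) powr T" using e by (simp add: powr_diff)
  then have small: "(e / a) powr T < e / b powr T"
    using assms by (simp add: powr_divide field_simps)
  have "(1 - e) powr T \<le> (1 - e) powr 1" using e assms by (intro powr_mono') auto
  then have "((1 - e) / b) powr T \<le> (1 - e) / b powr T"
    using e assms by (simp add: powr_divide divide_right_mono)
  with small have "(e / a) powr T + ((1 - e) / b) powr T < 1 / b powr T"
    by (simp add: diff_divide_distrib)
  then have "((e / a) powr T + ((1 - e) / b) powr T) powr (1 / T) < (1 / b powr T) powr (1 / T)"
    using assms e by (intro powr_less_mono2) auto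
  also have "\<dots> = 1 / b" using assms by (simp add: powr_divide powr_powr)
  finally have "mu a b (ereal T) (1 - e) < 1 / b"
    using e assms by (simp add: mu_def tnorm_ereal)
  with e show ?thesis by (intro exI[of _ "1 - e"]) auto
qed

lemma ex_mu_less_inverse:
  assumes "1 < t" "0 < a" "a < b"
  obtains p where "0 < p" "p < 1" "mu a b t p < 1 / b"
proof (cases t)
  case (real T)
  with assms ex_mu_ereal_less_inverse[of T a b] that show ?thesis by auto
next
  case PInf
  obtain p where p: "0 < p" "p < 1" "mu a b 2 p < 1 / b"
    using assms ex_mu_ereal_less_inverse[of 2 a b] by auto
  with assms PInf have "mu a b t p < mu a b 2 p" by (intro mu_strict_antimono) auto
  with p that show ?thesis by auto
qed (use assms in auto)

lemma Least_eq_Inf_closed: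
  fixes S :: "real set"
  assumes "closed S" "S \<noteq> {}" "bdd_below S"
  shows "(LEAST x. x \<in> S) = Inf S"
  using closed_contains_Inf[OF assms(2,3,1)] assms(3) by (intro Least_equality cInf_lower)

lemma
  assumes "1 \<le> t" "0 < b"
  shows r0_mem: "r0 a b t \<in> {0..1}"
    and mu_r0: "mu a b t (r0 a b t) = 1 / b"
    and r0_le: "r \<in> {0..1} \<Longrightarrow> mu a b t r = 1 / b \<Longrightarrow> r0 a b t \<le> r"
proof -
  define Z where "Z = {r \<in> {0..1}. mu a b t r = 1 / b}"
  have "closed Z"
    unfolding Z_def using assms
    by (intro continuous_closed_preimage_constant continuous_on_mu) auto
  moreover have "Z \<noteq> {}" using assms by (auto simp: Z_def mu_at_1)
  moreover have bdd: "bdd_below Z" by (rule bdd_belowI[of _ 0]) (simp add: Z_def)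
  ultimately have Inf_mem: "Inf Z \<in> Z" and "(LEAST r. r \<in> Z) = Inf Z"
    by (simp_all add: closed_contains_Inf Least_eq_Inf_closed)
  then have r0_Inf: "r0 a b t = Inf Z" by (simp add: r0_def Z_def)
  with Inf_mem show "r0 a b t \<in> {0..1}" "mu a b t (r0 a b t) = 1 / b"
    by (simp_all add: Z_def)
  show "r0 a b t \<le> r" if "r \<in> {0..1}" "mu a b t r = 1 / b"
    using that bdd by (simp add: r0_Inf Z_def cInf_lower)
qed

lemma r0_less:
  assumes "1 \<le> t" "0 < a" "a < b" "q \<in> {0..1}" "mu a b t q < 1 / b"
  shows "r0 a b t < q"
proof -
  have "1 / b < mu a b t 0" using assms by (simp add: mu_at_0 frac_less2)
  then obtain x where x: "0 \<le> x" "x \<le> q" "mu a b t x = 1 / b"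
    using IVT2'[of "mu a b t" q "1 / b" 0] assms continuous_on_mu by fastforce
  with assms have "x \<noteq> q" by auto
  with x assms show ?thesis using r0_le[of t b x a] by auto
qed

lemma r0_pos:
  assumes "1 \<le> t" "0 < a" "a < b"
  shows "0 < r0 a b t"
  using assms r0_mem[of t b a] mu_r0[of t b a] mu_at_0[of t a b]
  by (cases "r0 a b t = 0") auto

lemma r0_at_1:
  assumes "0 < a" "a < b"
  shows "r0 a b 1 = 1"
  using assms r0_mem[of 1 b a] mu_r0[of 1 b a] mu_one_eq_inverse_iff by auto

lemma r0_strict_antimono:
  assumes "1 \<le> s" "s < t" and ab: "0 < a" "a < b"
  shows "r0 a b t < r0 a b s"
proof (cases "s = 1")
  case True
  with assms have "1 < t" by simp
  from this ab obtain p where "0 < p" "p < 1" "mu a b t p < 1 / b" by (rule ex_mu_less_inverse)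
  with assms have "r0 a b t < p" by (intro r0_less) auto
  with \<open>p < 1\<close> True assms show ?thesis by (simp add: r0_at_1)
next
  case False
  with assms have "1 < s" by simp
  from this ab obtain p where "0 < p" "p < 1" "mu a b s p < 1 / b" by (rule ex_mu_less_inverse)
  with assms have "r0 a b s < 1" using r0_less[of s a b p] by auto
  with assms have "mu a b t (r0 a b s) < mu a b s (r0 a b s)"
    by (intro mu_strict_antimono r0_pos) auto
  with assms show ?thesis using r0_mem[of s b a] mu_r0[of s b a]
    by (intro r0_less) auto
qed

theorem lemma4:
  fixes a1 a2 :: int
  assumes "1 < a1" and "a1 < a2" and "coprime a1 a2"
  shows "\<forall>s t :: ereal. 1 \<le> s \<longrightarrow> s < t \<longrightarrow>
           r0 (real_of_int a1) (real_of_int a2) t < r0 (real_of_int a1) (real_of_int a2) s"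
  using assms by (auto intro: r0_strict_antimono)

end
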